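(* For every integer $n\geq 3$, the cycle $C_n$ on $n$ vertices satisfies $\operatorname{th}_{\operatorname{H}}(C_n)=\lceil 2\sqrt{n-2}+1\rceil$.
   Context: All graphs are finite, simple and undirected. Hopping color change rule: a blue vertex $v$ may force a white vertex $w$ to become blue if $v$ has not previously performed a force and every neighbor of $v$ is blue. For an initial blue set $B$, a chronological list of forces of $B$ is a sequence of such forces applied one at a time until no further force is possible; its underlying unordered set is a set of forces of $B$. $B$ is a hopping forcing set if some chronological list of forces of $B$ turns all vertices blue. For a set of forces $\mathcal F$ of $B$, let $\mathcal F^{(0)}=B$ and for $t\geq1$ let $\mathcal F^{(t)}$ be the set of vertices $w\notin U_{t-1}:=\bigcup_{i=0}^{t-1}\mathcal F^{(i)}$ for which there is $(v\to w)\in\mathcal F$ with $v\in U_{t-1}$ and all neighbors of $v$ in $U_{t-1}$. $\operatorname{pt}_{\operatorname{H}}(G;\mathcal F)$ is the least $t$ with $\bigcup_{i=0}^t\mathcal F^{(i)}=V(G)$ ($\infty$ if none); $\operatorname{pt}_{\operatorname{H}}(G;B)$ is the minimum of $\operatorname{pt}_{\operatorname{H}}(G;\mathcal F)$ over sets of forces $\mathcal F$ of $B$ ($\infty$ if $B$ is not a hopping forcing set). $\operatorname{th}_{\operatorname{H}}(G)=\min_{B\subseteq V(G)}\big(|B|+\operatorname{pt}_{\operatorname{H}}(G;B)\big)$. *)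

theory Defs
  imports Complex_Main "HOL-Library.Extended_Nat"
begin

text \<open>A graph is given by a finite vertex set V and a symmetric irreflexive
adjacency relation E; neighbours of v are the u in V with E v u.\<close>

text \<open>Hopping colour change rule: with current blue set S and the set P of
vertices that have already forced, v can force w.\<close>
definition can_force :: "('a \<Rightarrow> 'a \<Rightarrow> bool) \<Rightarrow> 'a set \<Rightarrow> 'a set \<Rightarrow> 'a set \<Rightarrow> 'a \<Rightarrow> 'a \<Rightarrow> bool" where
  "can_force E V S P v w \<longleftrightarrow>
     v \<in> S \<and> v \<notin> P \<and> w \<in> V \<and> w \<notin> S \<and> (\<forall>u\<in>V. E v u \<longrightarrow> u \<in> S)"

fun hop_valid :: "('a \<Rightarrow> 'a \<Rightarrow> bool) \<Rightarrow> 'a set \<Rightarrow> 'a set \<Rightarrow> 'a set \<Rightarrow> ('a \<times> 'a) list \<Rightarrow> bool" where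
  "hop_valid E V S P [] = True"
| "hop_valid E V S P ((v, w) # fs) =
     (can_force E V S P v w \<and> hop_valid E V (insert w S) (insert v P) fs)"

definition chron_list :: "('a \<Rightarrow> 'a \<Rightarrow> bool) \<Rightarrow> 'a set \<Rightarrow> 'a set \<Rightarrow> ('a \<times> 'a) list \<Rightarrow> bool" where
  "chron_list E V B fs \<longleftrightarrow>
     hop_valid E V B {} fs \<and>
     \<not> (\<exists>v w. can_force E V (B \<union> snd ` set fs) (fst ` set fs) v w)"

definition set_of_forces :: "('a \<Rightarrow> 'a \<Rightarrow> bool) \<Rightarrow> 'a set \<Rightarrow> 'a set \<Rightarrow> ('a \<times> 'a) set \<Rightarrow> bool" where
  "set_of_forces E V B F \<longleftrightarrow> (\<exists>fs. chron_list E V B fs \<and> F = set fs)"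

definition hopping_forcing_set :: "('a \<Rightarrow> 'a \<Rightarrow> bool) \<Rightarrow> 'a set \<Rightarrow> 'a set \<Rightarrow> bool" where
  "hopping_forcing_set E V B \<longleftrightarrow>
     B \<subseteq> V \<and> (\<exists>fs. chron_list E V B fs \<and> B \<union> snd ` set fs = V)"

text \<open>U t = union of F^(0), ..., F^(t).\<close>
fun hop_U :: "('a \<Rightarrow> 'a \<Rightarrow> bool) \<Rightarrow> 'a set \<Rightarrow> 'a set \<Rightarrow> ('a \<times> 'a) set \<Rightarrow> nat \<Rightarrow> 'a set" where
  "hop_U E V B F 0 = B"
| "hop_U E V B F (Suc t) = hop_U E V B F t \<union>
     {w. w \<notin> hop_U E V B F t \<and> (\<exists>v. (v, w) \<in> F \<and> v \<in> hop_U E V B F t \<and>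
          (\<forall>u\<in>V. E v u \<longrightarrow> u \<in> hop_U E V B F t))}"

definition pt_H_forces :: "('a \<Rightarrow> 'a \<Rightarrow> bool) \<Rightarrow> 'a set \<Rightarrow> 'a set \<Rightarrow> ('a \<times> 'a) set \<Rightarrow> enat" where
  "pt_H_forces E V B F =
     (if \<exists>t. hop_U E V B F t = V then enat (LEAST t. hop_U E V B F t = V) else \<infinity>)"

definition pt_H :: "('a \<Rightarrow> 'a \<Rightarrow> bool) \<Rightarrow> 'a set \<Rightarrow> 'a set \<Rightarrow> enat" where
  "pt_H E V B =
     (if hopping_forcing_set E V B
      then (INF F \<in> {F. set_of_forces E V B F}. pt_H_forces E V B F)
      else \<infinity>)"

definition th_H :: "('a \<Rightarrow> 'a \<Rightarrow> bool) \<Rightarrow> 'a set \<Rightarrow> enat" where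
  "th_H E V = (INF B \<in> Pow V. enat (card B) + pt_H E V B)"

definition cycle_adj :: "nat \<Rightarrow> nat \<Rightarrow> nat \<Rightarrow> bool" where
  "cycle_adj n i j \<longleftrightarrow> i < n \<and> j < n \<and> (j = (i + 1) mod n \<or> i = (j + 1) mod n)"

end

theory Submission
  imports Defs
begin

text \<open>Call a vertex of a blue set U interior if all its neighbours are blue; only interior
vertices can force, and each vertex forces at most once, so a round starting from U_t adds at
most as many vertices as U_t has interior vertices. On the cycle a proper blue set with at least
two vertices has at least two non-interior vertices (the ends of its arcs), hence
|U_t| \<le> |B| + t (|B| - 2), and covering C_n after T rounds needs
n - 2 \<le> (|B| - 2)(T + 1). By AM-GM this gives |B| + T \<ge> 2 sqrt(n - 2) + 1. Conversely, from
a blue arc of k vertices the k - 2 inner vertices hop to the next k - 2 vertices in every round,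
and choosing k - 2 and T + 1 as the two halves of \<lceil>2 sqrt(n - 2)\<rceil> attains the bound.\<close>

section \<open>Growth of the blue set round by round\<close>

definition interior_vertices :: "('a \<Rightarrow> 'a \<Rightarrow> bool) \<Rightarrow> 'a set \<Rightarrow> 'a set \<Rightarrow> 'a set" where
  "interior_vertices E V U = {v \<in> U. \<forall>u\<in>V. E v u \<longrightarrow> u \<in> U}"

lemma interior_vertices_subset: "interior_vertices E V U \<subseteq> U"
  unfolding interior_vertices_def by auto

lemma interior_vertices_mono: "U \<subseteq> W \<Longrightarrow> interior_vertices E V U \<subseteq> interior_vertices E V W"
  unfolding interior_vertices_def by auto

lemma hop_U_Suc_eq:
  "hop_U E V B F (Suc t) = hop_U E V B F t \<union> F `` interior_vertices E V (hop_U E V B F t)"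
  unfolding interior_vertices_def by auto

declare hop_U.simps(2) [simp del]

lemma hop_U_mono: "t \<le> t' \<Longrightarrow> hop_U E V B F t \<subseteq> hop_U E V B F t'"
  by (rule lift_Suc_mono_le[of "hop_U E V B F"]) (auto simp: hop_U_Suc_eq)

lemma hop_U_subset: "hop_U E V B F t \<subseteq> B \<union> snd ` F"
  by (induction t) (force simp: hop_U_Suc_eq)+

lemma B_subset_hop_U: "B \<subseteq> hop_U E V B F t"
  using hop_U_mono[of 0 t] by simp

lemma hop_U_Suc_subset:
  "hop_U E V B F (Suc t) \<subseteq> B \<union> F `` interior_vertices E V (hop_U E V B F t)"
proof (induction t)
  case 0
  show ?case by (simp add: hop_U_Suc_eq)
next
  case (Suc t)
  have "interior_vertices E V (hop_U E V B F t) \<subseteq> interior_vertices E V (hop_U E V B F (Suc t))"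
    by (intro interior_vertices_mono hop_U_mono) simp
  with Suc.IH show ?case
    by (subst hop_U_Suc_eq) blast
qed

lemma hop_U_eq_if_interior_empty:
  "interior_vertices E V B = {} \<Longrightarrow> hop_U E V B F t = B"
  by (induction t) (auto simp: hop_U_Suc_eq)

lemma Image_eq_snd_image: "F `` I = snd ` {p \<in> F. fst p \<in> I}"
  by force

lemma finite_forces_from:
  assumes "inj_on fst F" and "finite I"
  shows "finite {p \<in> F. fst p \<in> I}"
proof -
  have "inj_on fst {p \<in> F. fst p \<in> I}" using assms(1) by (rule inj_on_subset) auto
  moreover have "finite (fst ` {p \<in> F. fst p \<in> I})" using assms(2) by (rule finite_subset[rotated]) auto
  ultimately show ?thesis by (simp add: finite_image_iff)
qed

lemma finite_Image_if_inj_fst: "inj_on fst F \<Longrightarrow> finite I \<Longrightarrow> finite (F `` I)"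
  unfolding Image_eq_snd_image by (simp add: finite_forces_from)

lemma card_Image_le_if_inj_fst:
  assumes "inj_on fst F" and "finite I"
  shows "card (F `` I) \<le> card I"
proof -
  let ?S = "{p \<in> F. fst p \<in> I}"
  have "card (F `` I) \<le> card ?S"
    unfolding Image_eq_snd_image by (rule card_image_le[OF finite_forces_from[OF assms]])
  also have "\<dots> = card (fst ` ?S)"
    using inj_on_subset[OF assms(1), of ?S] by (simp add: card_image)
  also have "\<dots> \<le> card I" using assms(2) by (intro card_mono) auto
  finally show ?thesis .
qed

lemma card_hop_U_Suc_le:
  assumes "inj_on fst F" and "finite (hop_U E V B F t)"
  shows "card (hop_U E V B F (Suc t)) \<le> card B + card (interior_vertices E V (hop_U E V B F t))"
proof -
  let ?I = "interior_vertices E V (hop_U E V B F t)"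
  have fin: "finite ?I" "finite B"
    using assms(2) interior_vertices_subset B_subset_hop_U finite_subset by metis+
  have "card (hop_U E V B F (Suc t)) \<le> card (B \<union> F `` ?I)"
    using hop_U_Suc_subset[of E V B F t] finite_Image_if_inj_fst[OF assms(1) fin(1)] fin(2)
    by (intro card_mono) auto
  also have "\<dots> \<le> card B + card (F `` ?I)" by (rule card_Un_le)
  also have "\<dots> \<le> card B + card ?I" using card_Image_le_if_inj_fst[OF assms(1) fin(1)] by simp
  finally show ?thesis .
qed

lemma card_hop_U_le:
  assumes "inj_on fst F" and "finite V" and "B \<subseteq> V" and "snd ` F \<subseteq> V"
    and boundary: "\<And>U. B \<subseteq> U \<Longrightarrow> U \<subseteq> V \<Longrightarrow> U \<noteq> V \<Longrightarrow> card (interior_vertices E V U) + c \<le> card U"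
    and "\<forall>j<t. hop_U E V B F j \<noteq> V"
  shows "card (hop_U E V B F t) \<le> card B + t * (card B - c)"
  using assms(6)
proof (induction t)
  case 0
  show ?case by simp
next
  case (Suc t)
  let ?U = "hop_U E V B F t"
  have U: "B \<subseteq> ?U" "?U \<subseteq> V" "?U \<noteq> V"
    using B_subset_hop_U[of B E V F t] hop_U_subset[of E V B F t] assms(3,4) Suc.prems by blast+
  have "card ?U \<le> card B + t * (card B - c)" using Suc by simp
  moreover have "card (interior_vertices E V ?U) + c \<le> card ?U" using boundary[OF U] .
  moreover have "card (hop_U E V B F (Suc t)) \<le> card B + card (interior_vertices E V ?U)"
    using card_hop_U_Suc_le[OF assms(1)] finite_subset[OF U(2) assms(2)] .
  ultimately have "card (hop_U E V B F (Suc t)) \<le> card B + (t * (card B - c) + (card B - c))"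
    by (cases "c \<le> card B") auto
  then show ?case by (simp add: add.commute)
qed

lemma card_le_if_hop_U_eq:
  assumes "inj_on fst F" and "finite V" and "B \<subseteq> V" and "snd ` F \<subseteq> V"
    and "\<And>U. B \<subseteq> U \<Longrightarrow> U \<subseteq> V \<Longrightarrow> U \<noteq> V \<Longrightarrow> card (interior_vertices E V U) + c \<le> card U"
    and "hop_U E V B F T = V"
  shows "card V \<le> card B + T * (card B - c)"
proof -
  define T0 where "T0 = (LEAST t. hop_U E V B F t = V)"
  have "hop_U E V B F T0 = V" unfolding T0_def by (rule LeastI[of _ T]) (rule assms(6))
  moreover have "\<forall>j<T0. hop_U E V B F j \<noteq> V" unfolding T0_def using not_less_Least by blast
  ultimately have "card V \<le> card B + T0 * (card B - c)"
    using card_hop_U_le[OF assms(1-5), of T0] by simp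
  also have "\<dots> \<le> card B + T * (card B - c)"
    unfolding T0_def using Least_le[of "\<lambda>t. hop_U E V B F t = V", OF assms(6)] by simp
  finally show ?thesis .
qed

lemma hop_valid_distinct_forcers:
  "hop_valid E V S P fs \<Longrightarrow> distinct (map fst fs) \<and> fst ` set fs \<inter> P = {} \<and> snd ` set fs \<subseteq> V"
  by (induction E V S P fs rule: hop_valid.induct) (auto simp: can_force_def)

lemma set_of_forces_inj_fst: "set_of_forces E V B F \<Longrightarrow> inj_on fst F"
  using hop_valid_distinct_forcers[of E V B "{}"]
  unfolding set_of_forces_def chron_list_def by (auto simp: distinct_map)

lemma set_of_forces_snd_subset: "set_of_forces E V B F \<Longrightarrow> snd ` F \<subseteq> V"
  using hop_valid_distinct_forcers[of E V B "{}"]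
  unfolding set_of_forces_def chron_list_def by auto

lemma chron_list_if_covers:
  "hop_valid E V B {} fs \<Longrightarrow> V \<subseteq> B \<union> snd ` set fs \<Longrightarrow> chron_list E V B fs"
  unfolding chron_list_def can_force_def by blast

lemma enat_le_th_H:
  assumes "\<And>B F T. B \<subseteq> V \<Longrightarrow> set_of_forces E V B F \<Longrightarrow> hop_U E V B F T = V \<Longrightarrow> s \<le> card B + T"
  shows "enat s \<le> th_H E V"
  unfolding th_H_def
proof (rule INF_greatest)
  fix B assume "B \<in> Pow V"
  have "enat (s - card B) \<le> pt_H_forces E V B F" if "set_of_forces E V B F" for F
  proof (cases "\<exists>t. hop_U E V B F t = V")
    case True
    then have "hop_U E V B F (LEAST t. hop_U E V B F t = V) = V" by (rule LeastI_ex)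
    then show ?thesis
      using True assms[OF _ that] \<open>B \<in> Pow V\<close> unfolding pt_H_forces_def by fastforce
  qed (simp add: pt_H_forces_def)
  then have "enat (s - card B) \<le> pt_H E V B"
    unfolding pt_H_def by (auto intro: INF_greatest)
  then have "enat (card B) + enat (s - card B) \<le> enat (card B) + pt_H E V B"
    by (rule add_left_mono)
  moreover have "enat s \<le> enat (card B) + enat (s - card B)" by simp
  ultimately show "enat s \<le> enat (card B) + pt_H E V B" by order
qed

lemma th_H_le:
  assumes "chron_list E V B fs" and "B \<subseteq> V" and "hop_U E V B (set fs) T = V"
  shows "th_H E V \<le> enat (card B + T)"
proof -
  have sof: "set_of_forces E V B (set fs)" unfolding set_of_forces_def using assms(1) by blast
  have "B \<union> snd ` set fs = V"
    using hop_U_subset[of E V B "set fs" T] set_of_forces_snd_subset[OF sof] assms(2,3) by blast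
  then have "hopping_forcing_set E V B" unfolding hopping_forcing_set_def using assms(1,2) by blast
  moreover have "pt_H_forces E V B (set fs) \<le> enat T"
    unfolding pt_H_forces_def using assms(3) by (auto intro: Least_le)
  ultimately have "pt_H E V B \<le> enat T"
    unfolding pt_H_def using sof by (simp add: INF_lower2)
  then have "enat (card B) + pt_H E V B \<le> enat (card B + T)"
    using add_left_mono[of "pt_H E V B" "enat T" "enat (card B)"] by simp
  moreover have "th_H E V \<le> enat (card B) + pt_H E V B"
    unfolding th_H_def using assms(2) by (intro INF_lower) simp
  ultimately show ?thesis by order
qed

section \<open>Interior vertices on the cycle\<close>

lemma cycle_adj_iff:
  "cycle_adj n v u \<longleftrightarrow> v < n \<and> (u = (v + 1) mod n \<or> u = (v + n - 1) mod n)"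
proof (cases "v < n")
  case True
  have "v = (u + 1) mod n \<longleftrightarrow> u = (v + n - 1) mod n" if "u < n"
  proof (cases "u + 1 < n")
    case True
    then show ?thesis using \<open>v < n\<close> by (auto simp: mod_if)
  next
    case False
    then show ?thesis using \<open>v < n\<close> that by (auto simp: mod_if)
  qed
  moreover have "(v + 1) mod n < n" "(v + n - 1) mod n < n" using True by simp_all
  ultimately show ?thesis unfolding cycle_adj_def by auto
qed (simp add: cycle_adj_def)

lemma cycle_pred_succ:
  fixes x n :: nat
  assumes "x < n"
  shows "((x + 1) mod n + n - 1) mod n = x"
proof (cases "x + 1 < n")
  case True
  then have "(x + 1) mod n + n - 1 = x + n" by simp
  then show ?thesis using assms by simp
next
  case False
  then have "x + 1 = n" using assms by simp
  then show ?thesis by simp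
qed

lemma interior_vertices_cycle:
  assumes "U \<subseteq> {..<n}"
  shows "interior_vertices (cycle_adj n) {..<n} U = {v \<in> U. (v + 1) mod n \<in> U \<and> (v + n - 1) mod n \<in> U}"
proof -
  have "(v + 1) mod n < n \<and> (v + n - 1) mod n < n" if "v \<in> U" for v
    using that assms by auto
  then show ?thesis using assms unfolding interior_vertices_def cycle_adj_iff by auto
qed

lemma cycle_succ_closed_eq:
  fixes W :: "nat set"
  assumes "W \<subseteq> {..<n}" and "y \<in> W" and succ: "\<forall>x\<in>W. (x + 1) mod n \<in> W"
  shows "W = {..<n}"
proof -
  have orbit: "(y + i) mod n \<in> W" for i
  proof (induction i)
    case 0
    show ?case using assms(1,2) by auto
  next
    case (Suc i)
    then show ?case using succ by (metis add_Suc_right mod_Suc_eq Suc_eq_plus1)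
  qed
  have "x \<in> W" if "x < n" for x
    using orbit[of "x + n - y"] that assms(1,2) by auto
  then show ?thesis using assms(1) by auto
qed

lemma cycle_pred_closed_cases:
  fixes W :: "nat set"
  assumes "W \<subseteq> {..<n}" and pred: "\<forall>x\<in>W. (x + n - 1) mod n \<in> W"
  shows "W = {} \<or> W = {..<n}"
proof -
  have "\<forall>x\<in>{..<n} - W. (x + 1) mod n \<in> {..<n} - W"
    using pred cycle_pred_succ by fastforce
  then have "{..<n} - W = {} \<or> {..<n} - W = {..<n}"
    using cycle_succ_closed_eq[of "{..<n} - W" n] by blast
  then show ?thesis using assms(1) by blast
qed

lemma card_interior_vertices_cycle:
  assumes U: "U \<subseteq> {..<n}" and "U \<noteq> {..<n}" and "2 \<le> card U"
  shows "card (interior_vertices (cycle_adj n) {..<n} U) + 2 \<le> card U"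
proof -
  let ?I = "interior_vertices (cycle_adj n) {..<n} U"
  have fin: "finite U" using U finite_subset by blast
  have "2 \<le> card (U - ?I)"
  proof (rule ccontr)
    assume small: "\<not> 2 \<le> card (U - ?I)"
    have "U \<noteq> {}" using \<open>2 \<le> card U\<close> by auto
    then obtain z where z: "z \<in> U" "(z + n - 1) mod n \<notin> U"
      using cycle_pred_closed_cases[OF U] \<open>U \<noteq> {..<n}\<close> by blast
    then have "z \<in> U - ?I" using interior_vertices_cycle[OF U] by blast
    moreover have "card (U - ?I) \<le> Suc 0" using small by simp
    ultimately have "U - ?I \<subseteq> {z}" using card_le_Suc0_iff_eq[of "U - ?I"] fin by blast
    define W where "W = U - {z}"
    \<comment> \<open>the predecessor of z is white, so no successor step leaves U - {z}\<close>
    have "\<forall>x\<in>W. (x + 1) mod n \<in> W"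
    proof
      fix x assume "x \<in> W"
      then have "x \<in> ?I" "x < n" using \<open>U - ?I \<subseteq> {z}\<close> U unfolding W_def by auto
      then have "(x + 1) mod n \<in> U" using interior_vertices_cycle[OF U] by blast
      moreover have "(x + 1) mod n \<noteq> z"
        using z(2) \<open>x \<in> W\<close> cycle_pred_succ[OF \<open>x < n\<close>] unfolding W_def by auto
      ultimately show "(x + 1) mod n \<in> W" unfolding W_def by blast
    qed
    moreover obtain y where "y \<in> W"
      using \<open>2 \<le> card U\<close> card_mono[of "{z}" U] unfolding W_def by force
    ultimately have "W = {..<n}" using cycle_succ_closed_eq[of W n y] U unfolding W_def by blast
    then show False using z(1) U unfolding W_def by blast
  qed
  moreover have "card (U - ?I) = card U - card ?I"
    by (rule card_Diff_subset[OF finite_subset[OF interior_vertices_subset fin] interior_vertices_subset])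
  moreover have "card ?I \<le> card U" by (rule card_mono[OF fin interior_vertices_subset])
  ultimately show ?thesis by linarith
qed

lemma interior_vertices_cycle_empty:
  assumes "2 \<le> n" and U: "U \<subseteq> {..<n}" and "card U \<le> 1"
  shows "interior_vertices (cycle_adj n) {..<n} U = {}"
proof (rule ccontr)
  assume "interior_vertices (cycle_adj n) {..<n} U \<noteq> {}"
  then obtain v where "v \<in> U" "(v + 1) mod n \<in> U" using interior_vertices_cycle[OF U] by blast
  moreover have "(v + 1) mod n \<noteq> v"
  proof (cases "v + 1 < n")
    case False
    then have "v + 1 = n" using \<open>v \<in> U\<close> U by auto
    then show ?thesis using \<open>2 \<le> n\<close> by auto
  qed simp
  moreover have "finite U" using U finite_subset by blast
  ultimately have "card {v, (v + 1) mod n} \<le> card U" by (intro card_mono) simp_all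
  then show False using \<open>(v + 1) mod n \<noteq> v\<close> \<open>card U \<le> 1\<close> by simp
qed

lemma cycle_hop_U_eq_imp_card_bound:
  assumes "3 \<le> n" and B: "B \<subseteq> {..<n}" and F: "set_of_forces (cycle_adj n) {..<n} B F"
    and covers: "hop_U (cycle_adj n) {..<n} B F T = {..<n}"
  shows "2 \<le> card B" and "n \<le> card B + T * (card B - 2)"
proof -
  show "2 \<le> card B"
  proof (rule ccontr)
    assume "\<not> 2 \<le> card B"
    then have "interior_vertices (cycle_adj n) {..<n} B = {}"
      using interior_vertices_cycle_empty[OF _ B] assms(1) by simp
    then have "hop_U (cycle_adj n) {..<n} B F T = B" by (rule hop_U_eq_if_interior_empty)
    then have "card B = n" using covers by (metis card_lessThan)
    then show False using \<open>\<not> 2 \<le> card B\<close> assms(1) by simp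
  qed
  have boundary: "card (interior_vertices (cycle_adj n) {..<n} U) + 2 \<le> card U"
    if "B \<subseteq> U" "U \<subseteq> {..<n}" "U \<noteq> {..<n}" for U
  proof (rule card_interior_vertices_cycle[OF that(2,3)])
    show "2 \<le> card U"
      using \<open>2 \<le> card B\<close> card_mono[OF finite_subset[OF that(2)] that(1)] by simp
  qed
  from card_le_if_hop_U_eq[OF set_of_forces_inj_fst[OF F] _ B set_of_forces_snd_subset[OF F] boundary covers]
  show "n \<le> card B + T * (card B - 2)" by simp
qed

section \<open>A forcing schedule on the cycle\<close>

lemma cycle_adj_path_neighbour:
  assumes "0 < v" and "v + 1 < n" and "cycle_adj n v u"
  shows "u = v - 1 \<or> u = v + 1"
proof -
  have "(v + n - 1) mod n = v - 1"
    using assms(1,2) mod_add_self2[of "v - 1" n] by simp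
  then show ?thesis using assms(2,3) unfolding cycle_adj_iff by auto
qed

definition cycle_forcing_list :: "nat \<Rightarrow> nat \<Rightarrow> (nat \<times> nat) list" where
  "cycle_forcing_list n k = map (\<lambda>j. (j + 1, k + j)) [0..<n - k]"

lemma hop_valid_cycle_forcing_suffix:
  assumes "3 \<le> k" and "i \<le> n - k"
  shows "hop_valid (cycle_adj n) {..<n} {..<k + i} {1..i} (map (\<lambda>j. (j + 1, k + j)) [i..<n - k])"
  using assms(2)
proof (induction "n - k - i" arbitrary: i)
  case 0
  then show ?case by simp
next
  case (Suc d)
  then have i: "i < n - k" by simp
  have "can_force (cycle_adj n) {..<n} {..<k + i} {1..i} (i + 1) (k + i)"
    unfolding can_force_def
  proof (intro conjI ballI impI)
    fix u assume "u \<in> {..<n}" "cycle_adj n (i + 1) u"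
    then have "u = i \<or> u = i + 2" using cycle_adj_path_neighbour[of "i + 1" n u] i assms(1) by auto
    then show "u \<in> {..<k + i}" using assms(1) by auto
  qed (use i assms(1) in auto)
  moreover have "hop_valid (cycle_adj n) {..<n} {..<k + Suc i} {1..Suc i}
      (map (\<lambda>j. (j + 1, k + j)) [Suc i..<n - k])"
    using Suc.hyps(1)[of "Suc i"] Suc.hyps(2) i by simp
  moreover have "insert (k + i) {..<k + i} = {..<k + Suc i}" "insert (Suc i) {1..i} = {1..Suc i}"
    by auto
  ultimately show ?case using i by (simp add: upt_conv_Cons)
qed

lemma snd_cycle_forcing_list: "snd ` set (cycle_forcing_list n k) = {k..<n}"
proof -
  have "snd ` set (cycle_forcing_list n k) = (\<lambda>j. j + k) ` {0..<n - k}"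
    unfolding cycle_forcing_list_def by (auto simp: image_image add.commute)
  also have "\<dots> = {k..<n}" by (cases "k \<le> n") (simp_all add: image_add_atLeastLessThan)
  finally show ?thesis .
qed

lemma chron_list_cycle_forcing_list:
  assumes "3 \<le> k"
  shows "chron_list (cycle_adj n) {..<n} {..<k} (cycle_forcing_list n k)"
proof (rule chron_list_if_covers)
  show "hop_valid (cycle_adj n) {..<n} {..<k} {} (cycle_forcing_list n k)"
    using hop_valid_cycle_forcing_suffix[OF assms, of 0 n] unfolding cycle_forcing_list_def by simp
  show "{..<n} \<subseteq> {..<k} \<union> snd ` set (cycle_forcing_list n k)"
    unfolding snd_cycle_forcing_list by auto
qed

lemma hop_U_cycle_forcing_list:
  assumes "3 \<le> k" and "k \<le> n"
  shows "{..<min n (k + t * (k - 2))} \<subseteq> hop_U (cycle_adj n) {..<n} {..<k} (set (cycle_forcing_list n k)) t"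
proof (induction t)
  case 0
  show ?case by auto
next
  case (Suc t)
  let ?U = "hop_U (cycle_adj n) {..<n} {..<k} (set (cycle_forcing_list n k)) t"
  let ?m = "min n (k + t * (k - 2))"
  show ?case
  proof
    fix w assume w: "w \<in> {..<min n (k + Suc t * (k - 2))}"
    show "w \<in> hop_U (cycle_adj n) {..<n} {..<k} (set (cycle_forcing_list n k)) (Suc t)"
    proof (cases "w < ?m")
      case True
      then have "w \<in> ?U" using Suc.IH by auto
      then show ?thesis unfolding hop_U_Suc_eq by blast
    next
      case False
      then have w: "k \<le> w" "w < n" "w < k + Suc t * (k - 2)" using w assms(2) by auto
      define v where "v = w - k + 1"
      have "(v, w) \<in> set (cycle_forcing_list n k)"
        unfolding cycle_forcing_list_def set_map v_def
        by (rule rev_image_eqI[of "w - k"]) (use w in auto)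
      moreover have "v + 1 < ?m" using w assms(1) unfolding v_def by (auto simp: algebra_simps)
      then have "v \<in> interior_vertices (cycle_adj n) {..<n} ?U"
        unfolding interior_vertices_def
      proof (intro CollectI conjI ballI impI)
        show "v \<in> ?U" using \<open>v + 1 < ?m\<close> Suc.IH by auto
        fix u assume "cycle_adj n v u"
        then have "u = v - 1 \<or> u = v + 1"
          using cycle_adj_path_neighbour[of v n u] \<open>v + 1 < ?m\<close> unfolding v_def by simp
        then have "u < ?m" using \<open>v + 1 < ?m\<close> by auto
        then show "u \<in> ?U" using Suc.IH by auto
      qed
      ultimately show ?thesis unfolding hop_U_Suc_eq by blast
    qed
  qed
qed

lemma th_H_cycle_le:
  assumes "3 \<le> k" and "k \<le> n" and "n \<le> k + T * (k - 2)"
  shows "th_H (cycle_adj n) {..<n} \<le> enat (k + T)"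
proof -
  let ?F = "set (cycle_forcing_list n k)"
  have "hop_U (cycle_adj n) {..<n} {..<k} ?F T = {..<n}"
  proof
    show "hop_U (cycle_adj n) {..<n} {..<k} ?F T \<subseteq> {..<n}"
      using hop_U_subset snd_cycle_forcing_list assms(2) by fastforce
    show "{..<n} \<subseteq> hop_U (cycle_adj n) {..<n} {..<k} ?F T"
      using hop_U_cycle_forcing_list[OF assms(1,2), of T] assms(3) by (simp add: min_absorb1)
  qed
  then show ?thesis
    using th_H_le[OF chron_list_cycle_forcing_list[OF assms(1)]] assms(2) by fastforce
qed

section \<open>Optimising the number of blue vertices and rounds\<close>

lemma two_sqrt_le_add:
  fixes x a b :: real
  assumes "0 \<le> x" and "0 \<le> a" and "0 \<le> b" and "x \<le> a * b"
  shows "2 * sqrt x \<le> a + b"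
proof (rule power2_le_imp_le)
  have "(2 * sqrt x)\<^sup>2 = 4 * x" using assms(1) by (simp add: power_mult_distrib)
  also have "\<dots> \<le> 4 * (a * b)" using assms(4) by simp
  also have "\<dots> \<le> (a + b)\<^sup>2" using sum_squares_ge_zero[of "a - b" 0]
    by (simp add: power2_eq_square algebra_simps)
  finally show "(2 * sqrt x)\<^sup>2 \<le> (a + b)\<^sup>2" .
qed (use assms in simp)

lemma ceiling_two_sqrt_le:
  fixes n k T :: nat
  assumes "2 \<le> n" and "2 \<le> k" and "n \<le> k + T * (k - 2)"
  shows "nat \<lceil>2 * sqrt (real n - 2) + 1\<rceil> \<le> k + T"
proof -
  have "real n \<le> real k + real T * (real k - 2)"
    using assms(2,3) by (metis of_nat_add of_nat_diff of_nat_le_iff of_nat_mult of_nat_numeral)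
  then have "real n - 2 \<le> (real k - 2) * (real T + 1)" by (simp add: algebra_simps)
  then have "2 * sqrt (real n - 2) \<le> (real k - 2) + (real T + 1)"
    using assms(1,2) by (intro two_sqrt_le_add) simp_all
  then have "2 * sqrt (real n - 2) + 1 \<le> of_int (int (k + T))" by simp
  then have "\<lceil>2 * sqrt (real n - 2) + 1\<rceil> \<le> int (k + T)" by (rule ceiling_le)
  then show ?thesis by simp
qed

lemma le_mult_halves:
  fixes m c :: nat
  assumes "4 * m \<le> c * c"
  shows "m \<le> c div 2 * (c - c div 2)"
proof (cases "even c")
  case True
  then obtain j where "c = 2 * j" by blast
  then show ?thesis using assms by simp
next
  case False
  then obtain j where "c = 2 * j + 1" using oddE by blast
  moreover have "c * c = 4 * (j * j + j) + 1" using \<open>c = 2 * j + 1\<close> by (simp add: algebra_simps)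
  ultimately show ?thesis using assms by (simp add: algebra_simps)
qed

lemma exists_optimal_rounds:
  fixes n :: nat
  assumes "3 \<le> n"
  obtains k T where "3 \<le> k" and "k \<le> n" and "n \<le> k + T * (k - 2)"
    and "k + T = nat \<lceil>2 * sqrt (real n - 2) + 1\<rceil>"
proof -
  define m where "m = n - 2"
  define c where "c = nat \<lceil>2 * sqrt (real m)\<rceil>"
  have m: "1 \<le> m" "real n - 2 = real m" using assms unfolding m_def by auto
  have c0: "0 \<le> \<lceil>2 * sqrt (real m)\<rceil>" using ceiling_mono[of 0 "2 * sqrt (real m)"] by simp
  then have "real c = of_int \<lceil>2 * sqrt (real m)\<rceil>" unfolding c_def by simp
  then have c: "2 * sqrt (real m) \<le> real c" "real c < 2 * sqrt (real m) + 1"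
    by linarith+
  have "sqrt (real m) \<le> real m" using m(1) real_sqrt_le_iff[of m "m * m"]
    by (simp add: real_sqrt_mult_self)
  have "4 * real m \<le> real c * real c"
    using power_mono[OF c(1), of 2] by (simp add: power_mult_distrib power2_eq_square)
  then have "4 * m \<le> c * c" by (metis of_nat_le_iff of_nat_mult of_nat_numeral)
  define a where "a = c div 2"
  define b where "b = c - a"
  have ab: "m \<le> a * b" unfolding a_def b_def by (rule le_mult_halves) fact
  have "1 \<le> sqrt (real m)" using m(1) by simp
  then have "2 \<le> c" using c(1) by linarith
  then have "1 \<le> a" "1 \<le> b" unfolding a_def b_def by auto
  have "a \<le> m" using c(2) \<open>sqrt (real m) \<le> real m\<close> unfolding a_def by linarith
  show ?thesis
  proof (rule that[of "a + 2" "b - 1"])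
    show "3 \<le> a + 2" "a + 2 \<le> n" using \<open>1 \<le> a\<close> \<open>a \<le> m\<close> assms unfolding m_def by auto
    have "a * b = a + (b - 1) * a" using \<open>1 \<le> b\<close> by (cases b) auto
    then show "n \<le> a + 2 + (b - 1) * (a + 2 - 2)" using ab assms unfolding m_def by simp
    have "nat \<lceil>2 * sqrt (real n - 2) + 1\<rceil> = c + 1"
      unfolding m(2) c_def using c0 by (simp add: nat_add_distrib)
    then show "a + 2 + (b - 1) = nat \<lceil>2 * sqrt (real n - 2) + 1\<rceil>"
      using \<open>1 \<le> b\<close> unfolding b_def by simp
  qed
qed

theorem proposition3p6:
  fixes n :: nat
  assumes "n \<ge> 3"
  shows "th_H (cycle_adj n) {..<n} = enat (nat \<lceil>2 * sqrt (real n - 2) + 1\<rceil>)"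
proof (rule antisym)
  obtain k T where "3 \<le> k" "k \<le> n" "n \<le> k + T * (k - 2)"
    and "k + T = nat \<lceil>2 * sqrt (real n - 2) + 1\<rceil>"
    using exists_optimal_rounds[OF assms] .
  then show "th_H (cycle_adj n) {..<n} \<le> enat (nat \<lceil>2 * sqrt (real n - 2) + 1\<rceil>)"
    using th_H_cycle_le by metis
  show "enat (nat \<lceil>2 * sqrt (real n - 2) + 1\<rceil>) \<le> th_H (cycle_adj n) {..<n}"
  proof (rule enat_le_th_H)
    fix B F T
    assume "B \<subseteq> {..<n}" "set_of_forces (cycle_adj n) {..<n} B F"
      and "hop_U (cycle_adj n) {..<n} B F T = {..<n}"
    from cycle_hop_U_eq_imp_card_bound[OF assms this]
    show "nat \<lceil>2 * sqrt (real n - 2) + 1\<rceil> \<le> card B + T"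
      using ceiling_two_sqrt_le assms by simp
  qed
qed

end
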